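(* Consider, for $N\ge2$ and $\varepsilon>0$, the one-dimensional system $$\dot x_i=v_i,\qquad \dot v_i=-\frac1{\varepsilon^2N}\sum_{j\ne i}g'(x_i-x_j)-\frac1{\varepsilon^2}V'(x_i),\qquad 1\le i\le N,$$ with $g(x)=-|x|$ and $V(x)=|x|^2$, and let $\mu_V$ be the associated equilibrium measure. There exists a sequence of initial positions $X_N^\circ=(x_1^\circ,\dots,x_N^\circ)$ such that $\mathsf{F}_N(X_N^\circ,\mu_V)\to0$ and $\frac1N\sum_i\delta_{x_i^\circ}\rightharpoonup\mu_V$ as $N\to\infty$, but such that if $v_i^\circ=0$ for every $i$, the empirical current $J_N^t:=\frac1N\sum_{i=1}^Nv_i^t\delta_{x_i^t}$ of the corresponding solution (i) converges to zero (the unique solution of the Lake equation with zero initial datum) uniformly in $t\in[0,\infty)$ as $\varepsilon+N^{-1}\to0$, if $\varepsilon N\to\infty$; (ii) has no weak limit as $\varepsilon+N^{-1}\to0$, for any $t\in(0,\infty)$, if $\varepsilon N\not\to\infty$.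
   Context: The equilibrium measure $\mu_V$ is the unique minimizer over probability measures on $\mathbb{R}$ of $\int Vd\mu+\frac12\iint g(x-y)d\mu(x)d\mu(y)$. The modulated potential energy is $\mathsf{F}_N(X_N,\mu):=\frac12\iint_{\mathbb{R}^2\setminus\triangle}g(x-y)\,d(\frac1N\sum_i\delta_{x_i}-\mu)^{\otimes2}(x,y)$, $\triangle$ the diagonal. The Lake equation here is $\partial_tu+u\partial_xu=-\partial_xp$, $\partial_x(\mu_Vu)=0$ on the support of $\mu_V$. In the limit $\varepsilon$ may depend on $N$. *)

theory Defs
  imports "HOL-Probability.Probability"
begin

definition gfun :: "real \<Rightarrow> real" where
  "gfun x = - \<bar>x\<bar>"

definition Vfun :: "real \<Rightarrow> real" where
  "Vfun x = x\<^sup>2"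

text \<open>g' : the derivative of g away from 0, with the convention g'(0) = 0
  (value at coinciding particles).\<close>
definition gder :: "real \<Rightarrow> real" where
  "gder x = (if x = 0 then 0 else deriv gfun x)"

text \<open>Admissible probability measures on the real line (finite V-moment;
  all others have infinite energy).\<close>
definition admissible :: "real measure \<Rightarrow> bool" where
  "admissible \<mu> \<longleftrightarrow> prob_space \<mu> \<and> sets \<mu> = sets borel \<and> integrable \<mu> Vfun"

definition energy :: "real measure \<Rightarrow> real" where
  "energy \<mu> = (\<integral>x. Vfun x \<partial>\<mu>) + 1/2 * (\<integral>x. (\<integral>y. gfun (x - y) \<partial>\<mu>) \<partial>\<mu>)"

definition equilibrium_measure :: "real measure" where
  "equilibrium_measure =
     (THE \<mu>. admissible \<mu> \<and> (\<forall>\<nu>. admissible \<nu> \<longrightarrow> energy \<mu> \<le> energy \<nu>))"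

text \<open>Modulated energy F_N(X_N, mu); the configuration is x i, i < N.
  Since g(0) = 0, removing the diagonal has no effect except for the
  exclusion i \<noteq> j in the particle-particle term.\<close>
definition modulated_energy :: "nat \<Rightarrow> (nat \<Rightarrow> real) \<Rightarrow> real measure \<Rightarrow> real" where
  "modulated_energy N x \<mu> = 1/2 *
     ( (1 / (real N)\<^sup>2) * (\<Sum>i<N. \<Sum>j\<in>{..<N} - {i}. gfun (x i - x j))
       - (2 / real N) * (\<Sum>i<N. \<integral>y. gfun (x i - y) \<partial>\<mu>)
       + (\<integral>x. (\<integral>y. gfun (x - y) \<partial>\<mu>) \<partial>\<mu>) )"

definition bounded_continuous_fun :: "(real \<Rightarrow> real) \<Rightarrow> bool" where
  "bounded_continuous_fun \<phi> \<longleftrightarrow> continuous_on UNIV \<phi> \<and> bounded (range \<phi>)"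

definition is_solution ::
  "real \<Rightarrow> nat \<Rightarrow> (nat \<Rightarrow> real) \<Rightarrow> (real \<Rightarrow> nat \<Rightarrow> real) \<Rightarrow> (real \<Rightarrow> nat \<Rightarrow> real) \<Rightarrow> bool" where
  "is_solution \<epsilon> N x0 x v \<longleftrightarrow>
     (\<forall>i<N. x 0 i = x0 i \<and> v 0 i = 0) \<and>
     (\<forall>t\<ge>0. \<forall>i<N.
        ((\<lambda>s. x s i) has_real_derivative v t i) (at t within {0..}) \<and>
        ((\<lambda>s. v s i) has_real_derivative
           (- (1 / (\<epsilon>\<^sup>2 * real N)) * (\<Sum>j\<in>{..<N} - {i}. gder (x t i - x t j))
            - (1 / \<epsilon>\<^sup>2) * deriv Vfun (x t i))) (at t within {0..}))"

definition current_pairing ::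
  "nat \<Rightarrow> (real \<Rightarrow> nat \<Rightarrow> real) \<Rightarrow> (real \<Rightarrow> nat \<Rightarrow> real) \<Rightarrow> real \<Rightarrow> (real \<Rightarrow> real) \<Rightarrow> real" where
  "current_pairing N x v t \<phi> = (1 / real N) * (\<Sum>i<N. v t i * \<phi> (x t i))"

definition bounded_regime :: "real \<Rightarrow> (real \<times> nat) filter" where
  "bounded_regime C = inf (at_right 0 \<times>\<^sub>F at_top) (principal {(\<epsilon>, N). \<epsilon> * real N \<le> C})"

end

(*
  The equilibrium measure of V(x) = x^2 with kernel g(x) = -|x| is the uniform distribution on
  [-1/2, 1/2]: expressing the mean distance of two distributions through their distribution
  functions shows that the energy of any admissible measure exceeds that of the uniform
  distribution by at least the squared L^2 distance of the distribution functions.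

  The initial positions are the quantiles (i + 1)/N - 1/2 of this distribution, whose modulated
  energy is 1/(3 N^2) and whose empirical measures are Riemann sums. Since g' = -sgn, ordered
  particles feel an interaction force depending only on their rank, and in the quantile
  configuration all particles feel the same total force. The configuration therefore moves
  rigidly, its displacement oscillating with frequency sqrt 2 / eps and amplitude 1/(2 N); an
  energy estimate for the difference of two solutions, valid while the particles stay separated,
  shows that it is the only solution. All particles share the velocity
  -sqrt 2 sin (sqrt 2 t / eps) / (2 eps N), so the current is of order 1/(eps N), which gives (i).
  If eps N stays bounded, choosing eps so that the phase sqrt 2 t / eps is a multiple of 2 pi,
  or such a multiple plus pi/2, yields currents equal to 0 and bounded away from 0, which
  gives (ii).
*)

theory Submission
  imports Defs
begin

section \<open>Mean distance and distribution functions\<close>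

lemma ennreal_abs_diff_eq_nn_integral:
  fixes x y :: real
  shows "ennreal \<bar>x - y\<bar> = (\<integral>\<^sup>+u. indicator {x..<y} u + indicator {y..<x} u \<partial>lborel)"
  by (subst nn_integral_add) (auto simp: abs_real_def)

text \<open>The probability that the point \<open>u\<close> separates independent samples of \<open>\<rho>\<close> and \<open>\<rho>'\<close>.\<close>
definition separation_prob :: "real measure \<Rightarrow> real measure \<Rightarrow> real \<Rightarrow> real" where
  "separation_prob \<rho> \<rho>' u = cdf \<rho> u * (1 - cdf \<rho>' u) + cdf \<rho>' u * (1 - cdf \<rho> u)"

lemma separation_prob_nonneg:
  assumes "real_distribution \<rho>" "real_distribution \<rho>'"
  shows "separation_prob \<rho> \<rho>' u \<ge> 0"
proof -
  interpret P: real_distribution \<rho> by (rule assms(1))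
  interpret P': real_distribution \<rho>' by (rule assms(2))
  show ?thesis
    using P.cdf_nonneg[of u] P.cdf_bounded_prob[of u] P'.cdf_nonneg[of u] P'.cdf_bounded_prob[of u]
    by (simp add: separation_prob_def)
qed

lemma (in real_distribution) borel_measurable_cdf [measurable]: "cdf M \<in> borel_measurable borel"
  by (intro borel_measurable_mono monoI cdf_nondecreasing)

lemma separation_prob_measurable [measurable]:
  assumes "real_distribution \<rho>" "real_distribution \<rho>'"
  shows "separation_prob \<rho> \<rho>' \<in> borel_measurable borel"
  using assms[THEN real_distribution.borel_measurable_cdf]
  unfolding separation_prob_def[abs_def] by measurable

lemma (in real_distribution) emeasure_atMost_greaterThan:
  "emeasure M {..u} = ennreal (cdf M u)" "emeasure M {u<..} = ennreal (1 - cdf M u)"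
proof -
  show "emeasure M {..u} = ennreal (cdf M u)" by (simp add: emeasure_eq_measure cdf_def)
  have "{u<..} = space M - {..u}" by auto
  then show "emeasure M {u<..} = ennreal (1 - cdf M u)"
    using prob_compl[of "{..u}"] by (simp add: emeasure_eq_measure cdf_def)
qed

lemma nn_integral_abs_diff_eq_separation_prob:
  assumes \<rho>: "real_distribution \<rho>" and \<rho>': "real_distribution \<rho>'"
  shows "(\<integral>\<^sup>+x. \<integral>\<^sup>+y. ennreal \<bar>x - y\<bar> \<partial>\<rho>' \<partial>\<rho>) = (\<integral>\<^sup>+u. ennreal (separation_prob \<rho> \<rho>' u) \<partial>lborel)"
proof -
  interpret P: real_distribution \<rho> by (rule \<rho>)
  interpret P': real_distribution \<rho>' by (rule \<rho>')
  interpret PL: pair_sigma_finite \<rho> lborel ..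
  interpret PL': pair_sigma_finite \<rho>' lborel ..
  note [measurable] = P'.borel_measurable_cdf
  define G where
    "G x u = indicator {..u} x * ennreal (1 - cdf \<rho>' u) + indicator {u<..} x * ennreal (cdf \<rho>' u)"
    for x u
  have inner: "(\<integral>\<^sup>+y. ennreal \<bar>x - y\<bar> \<partial>\<rho>') = (\<integral>\<^sup>+u. G x u \<partial>lborel)" for x
  proof -
    have "(\<integral>\<^sup>+y. ennreal \<bar>x - y\<bar> \<partial>\<rho>') =
        (\<integral>\<^sup>+y. \<integral>\<^sup>+u. indicator {..u} x * indicator {u<..} y + indicator {u<..} x * indicator {..u} y
          \<partial>lborel \<partial>\<rho>')"
      unfolding ennreal_abs_diff_eq_nn_integral by (intro nn_integral_cong) (auto simp: indicator_def)
    also have "\<dots> = (\<integral>\<^sup>+u. \<integral>\<^sup>+y. indicator {..u} x * indicator {u<..} y + indicator {u<..} x * indicator {..u} y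
        \<partial>\<rho>' \<partial>lborel)"
      by (rule PL'.Fubini'[symmetric])
        (unfold indicator_def of_bool_def atMost_iff greaterThan_iff, measurable)
    also have "\<dots> = (\<integral>\<^sup>+u. G x u \<partial>lborel)"
      by (simp add: nn_integral_add nn_integral_cmult G_def P'.emeasure_atMost_greaterThan)
    finally show ?thesis .
  qed
  have "(\<integral>\<^sup>+x. \<integral>\<^sup>+u. G x u \<partial>lborel \<partial>\<rho>) = (\<integral>\<^sup>+u. \<integral>\<^sup>+x. G x u \<partial>\<rho> \<partial>lborel)"
    by (rule PL.Fubini'[symmetric])
      (unfold G_def indicator_def of_bool_def atMost_iff greaterThan_iff, measurable)
  also have "\<dots> = (\<integral>\<^sup>+u. ennreal (separation_prob \<rho> \<rho>' u) \<partial>lborel)"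
  proof (rule nn_integral_cong)
    fix u
    have "(\<integral>\<^sup>+x. G x u \<partial>\<rho>) =
        ennreal (cdf \<rho> u) * ennreal (1 - cdf \<rho>' u) + ennreal (1 - cdf \<rho> u) * ennreal (cdf \<rho>' u)"
      by (simp add: G_def nn_integral_add nn_integral_multc P.emeasure_atMost_greaterThan)
    also have "\<dots> = ennreal (separation_prob \<rho> \<rho>' u)"
      using P.cdf_nonneg[of u] P.cdf_bounded_prob[of u] P'.cdf_nonneg[of u] P'.cdf_bounded_prob[of u]
      unfolding separation_prob_def by (subst ennreal_plus) (auto simp: ennreal_mult mult.commute)
    finally show "(\<integral>\<^sup>+x. G x u \<partial>\<rho>) = ennreal (separation_prob \<rho> \<rho>' u)" .
  qed
  finally show ?thesis by (simp add: inner)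
qed

definition mean_distance :: "real measure \<Rightarrow> real measure \<Rightarrow> real" where
  "mean_distance \<rho> \<rho>' = (\<integral>x. \<integral>y. \<bar>x - y\<bar> \<partial>\<rho>' \<partial>\<rho>)"

lemma
  assumes \<rho>: "real_distribution \<rho>" and \<rho>': "real_distribution \<rho>'"
    and int: "integrable \<rho> (\<lambda>x. x)" and int': "integrable \<rho>' (\<lambda>x. x)"
  shows integrable_separation_prob: "integrable lborel (separation_prob \<rho> \<rho>')"
    and mean_distance_eq_integral_separation_prob:
      "mean_distance \<rho> \<rho>' = (\<integral>u. separation_prob \<rho> \<rho>' u \<partial>lborel)"
proof -
  interpret P: real_distribution \<rho> by (rule \<rho>)
  interpret P': real_distribution \<rho>' by (rule \<rho>')
  define d where "d x = (\<integral>y. \<bar>x - y\<bar> \<partial>\<rho>')" for x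
  have int_abs: "integrable \<rho>' (\<lambda>y. \<bar>x - y\<bar>)" for x
    using int' by (intro integrable_abs Bochner_Integration.integrable_diff) auto
  have d_nonneg: "0 \<le> d x" for x
    unfolding d_def by (rule integral_nonneg_AE) auto
  have d_le: "d x \<le> \<bar>x\<bar> + (\<integral>y. \<bar>y\<bar> \<partial>\<rho>')" for x
  proof -
    have "d x \<le> (\<integral>y. \<bar>x\<bar> + \<bar>y\<bar> \<partial>\<rho>')"
      unfolding d_def using int' by (intro integral_mono int_abs) (auto intro: integrable_abs)
    also have "\<dots> = \<bar>x\<bar> + (\<integral>y. \<bar>y\<bar> \<partial>\<rho>')"
      using int' by (subst Bochner_Integration.integral_add)
        (auto intro: integrable_abs simp: P'.prob_space[unfolded P'.space_eq_univ])
    finally show ?thesis .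
  qed
  have int_d: "integrable \<rho> d"
  proof (rule Bochner_Integration.integrable_bound)
    show "integrable \<rho> (\<lambda>x. \<bar>x\<bar> + (\<integral>y. \<bar>y\<bar> \<partial>\<rho>'))"
      using int by (auto intro: integrable_abs)
    show "d \<in> borel_measurable \<rho>" unfolding d_def by measurable
    show "AE x in \<rho>. norm (d x) \<le> norm (\<bar>x\<bar> + (\<integral>y. \<bar>y\<bar> \<partial>\<rho>'))"
      using d_le d_nonneg by (auto intro!: AE_I2)
  qed
  have "(\<integral>\<^sup>+u. ennreal (separation_prob \<rho> \<rho>' u) \<partial>lborel) = (\<integral>\<^sup>+x. ennreal (d x) \<partial>\<rho>)"
    unfolding nn_integral_abs_diff_eq_separation_prob[OF \<rho> \<rho>', symmetric] d_def
    using int_abs by (intro nn_integral_cong nn_integral_eq_integral) auto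
  also have "\<dots> = ennreal (mean_distance \<rho> \<rho>')"
    unfolding mean_distance_def d_def[symmetric] using int_d d_nonneg
    by (intro nn_integral_eq_integral) auto
  finally have nn: "(\<integral>\<^sup>+u. ennreal (separation_prob \<rho> \<rho>' u) \<partial>lborel) = ennreal (mean_distance \<rho> \<rho>')" .
  show "integrable lborel (separation_prob \<rho> \<rho>')"
    using separation_prob_nonneg[OF \<rho> \<rho>']
    by (intro integrableI_nn_integral_finite[OF _ _ nn]) (auto simp: \<rho> \<rho>')
  show "mean_distance \<rho> \<rho>' = (\<integral>u. separation_prob \<rho> \<rho>' u \<partial>lborel)"
    using separation_prob_nonneg[OF \<rho> \<rho>'] nn integral_nonneg_AE[of d \<rho>] d_nonneg
    by (subst integral_eq_nn_integral) (auto simp: \<rho> \<rho>' mean_distance_def d_def)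
qed

lemma
  assumes \<nu>: "real_distribution \<nu>" and \<mu>: "real_distribution \<mu>"
    and int_\<nu>: "integrable \<nu> (\<lambda>x. x)" and int_\<mu>: "integrable \<mu> (\<lambda>x. x)"
  shows integrable_cdf_diff_square: "integrable lborel (\<lambda>u. (cdf \<nu> u - cdf \<mu> u)\<^sup>2)"
    and integral_cdf_diff_square: "(\<integral>u. (cdf \<nu> u - cdf \<mu> u)\<^sup>2 \<partial>lborel) =
      mean_distance \<nu> \<mu> - (mean_distance \<nu> \<nu> + mean_distance \<mu> \<mu>) / 2"
proof -
  have sq: "(\<lambda>u. (cdf \<nu> u - cdf \<mu> u)\<^sup>2) =
      (\<lambda>u. separation_prob \<nu> \<mu> u - (separation_prob \<nu> \<nu> u + separation_prob \<mu> \<mu> u) / 2)"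
    by (simp add: fun_eq_iff separation_prob_def power2_eq_square field_simps)
  note int = integrable_separation_prob[OF \<nu> \<mu> int_\<nu> int_\<mu>] integrable_separation_prob[OF \<nu> \<nu> int_\<nu> int_\<nu>]
    integrable_separation_prob[OF \<mu> \<mu> int_\<mu> int_\<mu>]
  show "integrable lborel (\<lambda>u. (cdf \<nu> u - cdf \<mu> u)\<^sup>2)"
    unfolding sq using int by auto
  show "(\<integral>u. (cdf \<nu> u - cdf \<mu> u)\<^sup>2 \<partial>lborel) =
      mean_distance \<nu> \<mu> - (mean_distance \<nu> \<nu> + mean_distance \<mu> \<mu>) / 2"
    unfolding sq using int
    by (simp add: mean_distance_eq_integral_separation_prob \<nu> \<mu> int_\<nu> int_\<mu>)
qed

lemma real_distribution_eqI_AE_cdf: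
  assumes M: "real_distribution M" and N: "real_distribution N"
    and AE_eq: "AE u in lborel. cdf M u = cdf N u"
  shows "M = N"
proof (rule cdf_unique[OF M N], rule ext, rule ccontr)
  fix u assume ne: "cdf M u \<noteq> cdf N u"
  define D where "D s = cdf M s - cdf N s" for s
  have "continuous (at_right u) (cdf M)" "continuous (at_right u) (cdf N)"
    using M N
    by (auto intro: finite_borel_measure.cdf_is_right_cont real_distribution.finite_borel_measure_M)
  then have "(D \<longlongrightarrow> D u) (at_right u)"
    unfolding D_def[abs_def] continuous_within by (intro tendsto_diff)
  moreover have "D u \<noteq> 0" using ne by (simp add: D_def)
  ultimately have "\<forall>\<^sub>F s in at_right u. D s \<noteq> 0"
    by (rule tendsto_imp_eventually_ne)
  then obtain b where "b > u" and b: "\<And>s. u < s \<Longrightarrow> s < b \<Longrightarrow> D s \<noteq> 0"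
    unfolding eventually_at_right_field by auto
  from AE_eq obtain Z where Z: "{s \<in> space lborel. cdf M s \<noteq> cdf N s} \<subseteq> Z"
    "emeasure lborel Z = 0" "Z \<in> sets lborel"
    by (rule AE_E) simp
  have "{u<..<b} \<subseteq> Z" using Z(1) b by (auto simp: D_def)
  then have "emeasure lborel {u<..<b} \<le> emeasure lborel Z" by (intro emeasure_mono Z(3))
  with Z(2) \<open>b > u\<close> show False by simp
qed

section \<open>The equilibrium measure\<close>

lemma has_real_derivative_mult_abs: "((\<lambda>s. s * \<bar>s\<bar>) has_real_derivative 2 * \<bar>s\<bar>) (at s)"
proof (cases s "0::real" rule: linorder_cases)
  case less
  have "((\<lambda>s. - (s * s)) has_real_derivative 2 * \<bar>s\<bar>) (at s)"
    using less by (auto intro!: derivative_eq_intros)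
  then show ?thesis
    by (rule has_field_derivative_transform_within_open[where S = "{..<0}"]) (use less in auto)
next
  case equal
  have "((\<lambda>h. \<bar>h\<bar>) \<longlongrightarrow> 0) (at (0::real))"
    by (intro tendsto_rabs_zero tendsto_ident_at)
  moreover have "\<forall>\<^sub>F h in at (0::real). \<bar>h\<bar> = (h * \<bar>h\<bar> - 0 * \<bar>0\<bar>) / h"
    unfolding eventually_at_filter by (auto intro!: always_eventually simp: field_simps)
  ultimately have "((\<lambda>h. (h * \<bar>h\<bar> - 0 * \<bar>0\<bar>) / h) \<longlongrightarrow> 0) (at (0::real))"
    by (rule Lim_transform_eventually)
  then show ?thesis using equal by (simp add: has_field_derivative_iff)
next
  case greater
  have "((\<lambda>s. s * s) has_real_derivative 2 * \<bar>s\<bar>) (at s)"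
    using greater by (auto intro!: derivative_eq_intros)
  then show ?thesis
    by (rule has_field_derivative_transform_within_open[where S = "{0<..}"]) (use greater in auto)
qed

lemma integral_abs_diff_atLeastAtMost:
  fixes a b x :: real
  assumes "a \<le> b"
  shows "integral {a..b} (\<lambda>y. \<bar>x - y\<bar>) = ((x - a) * \<bar>x - a\<bar> - (x - b) * \<bar>x - b\<bar>) / 2"
proof -
  have antideriv: "(\<lambda>y. - 1/2 * ((x - y) * \<bar>x - y\<bar>)) = (\<lambda>y. (y - x) * \<bar>x - y\<bar> / 2)"
    by (simp add: fun_eq_iff field_simps)
  have "((\<lambda>y. \<bar>x - y\<bar>) has_integral (b - x) * \<bar>x - b\<bar> / 2 - (a - x) * \<bar>x - a\<bar> / 2) {a..b}"
  proof (rule fundamental_theorem_of_calculus[OF assms])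
    fix y
    have "((\<lambda>y. (x - y) * \<bar>x - y\<bar>) has_real_derivative 2 * \<bar>x - y\<bar> * (-1)) (at y)"
      by (rule DERIV_chain2[OF has_real_derivative_mult_abs]) (auto intro!: derivative_eq_intros)
    from DERIV_cmult[OF this, of "- 1/2"]
    show "((\<lambda>y. (y - x) * \<bar>x - y\<bar> / 2) has_vector_derivative \<bar>x - y\<bar>) (at y within {a..b})"
      unfolding antideriv
      by (simp add: has_real_derivative_iff_has_vector_derivative[symmetric] has_field_derivative_at_within)
  qed
  then show ?thesis by (simp add: integral_unique field_simps)
qed

lemma integral_square_atLeastAtMost:
  fixes a b :: real
  assumes "a \<le> b"
  shows "integral {a..b} (\<lambda>x. x\<^sup>2) = (b ^ 3 - a ^ 3) / 3"
proof -
  have "((\<lambda>x. x\<^sup>2) has_integral b ^ 3 / 3 - a ^ 3 / 3) {a..b}"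
    using assms by (intro fundamental_theorem_of_calculus)
      (auto intro!: derivative_eq_intros simp: has_real_derivative_iff_has_vector_derivative[symmetric]
        power2_eq_square)
  then show ?thesis by (simp add: integral_unique diff_divide_distrib)
qed

definition unif :: "real measure" where
  "unif = uniform_measure lborel {-1/2..1/2}"

lemma unif_eq_density: "unif = density lborel (\<lambda>x. ennreal (indicator {-1/2..1/2} x))"
  by (simp add: unif_def uniform_measure_def divide_ennreal_def ennreal_indicator)

lemma real_distribution_unif: "real_distribution unif"
  unfolding real_distribution_def real_distribution_axioms_def unif_def
  by (auto intro: prob_space_uniform_measure)

lemma
  fixes f :: "real \<Rightarrow> real"
  assumes cont: "continuous_on {-1/2..1/2} f" and meas: "f \<in> borel_measurable borel"
  shows integrable_unif: "integrable unif f"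
    and integral_unif: "(\<integral>x. f x \<partial>unif) = integral {-1/2..1/2} f"
proof -
  have f: "set_integrable lborel {-1/2..1/2::real} f"
    by (rule borel_integrable_atLeastAtMost'[OF cont])
  then show "integrable unif f"
    unfolding unif_eq_density set_integrable_def using meas by (subst integrable_density) auto
  have "(\<integral>x. f x \<partial>unif) = (LINT x:{-1/2..1/2}|lborel. f x)"
    unfolding unif_eq_density set_lebesgue_integral_def using meas by (subst integral_density) auto
  also have "\<dots> = integral {-1/2..1/2} f"
    by (rule set_borel_integral_eq_integral(2)[OF f])
  finally show "(\<integral>x. f x \<partial>unif) = integral {-1/2..1/2} f" .
qed

lemma integral_abs_diff_unif:
  "(\<integral>y. \<bar>x - y\<bar> \<partial>unif) = ((x + 1/2) * \<bar>x + 1/2\<bar> - (x - 1/2) * \<bar>x - 1/2\<bar>) / 2"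
  by (subst integral_unif) (auto intro!: continuous_intros simp: integral_abs_diff_atLeastAtMost)

lemma integral_abs_diff_unif_inside:
  assumes "\<bar>x\<bar> \<le> 1/2"
  shows "(\<integral>y. \<bar>x - y\<bar> \<partial>unif) = x\<^sup>2 + 1/4"
proof -
  have "\<bar>x + 1/2\<bar> = x + 1/2" "\<bar>x - 1/2\<bar> = 1/2 - x" using assms by auto
  then show ?thesis unfolding integral_abs_diff_unif by (simp add: power2_eq_square field_simps)
qed

lemma integral_abs_diff_unif_outside:
  assumes "\<bar>x\<bar> \<ge> 1/2"
  shows "(\<integral>y. \<bar>x - y\<bar> \<partial>unif) = \<bar>x\<bar>"
proof (cases "x \<ge> 0")
  case True
  then have "\<bar>x + 1/2\<bar> = x + 1/2" "\<bar>x - 1/2\<bar> = x - 1/2" using assms by auto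
  then show ?thesis unfolding integral_abs_diff_unif using True by (simp add: field_simps)
next
  case False
  then have "\<bar>x + 1/2\<bar> = - x - 1/2" "\<bar>x - 1/2\<bar> = 1/2 - x" using assms by auto
  then show ?thesis unfolding integral_abs_diff_unif using False by (simp add: field_simps)
qed

lemma integral_abs_diff_unif_le: "(\<integral>y. \<bar>x - y\<bar> \<partial>unif) \<le> x\<^sup>2 + 1/4"
proof (cases "\<bar>x\<bar> \<le> 1/2")
  case True
  then show ?thesis by (simp add: integral_abs_diff_unif_inside)
next
  case False
  have "0 \<le> (\<bar>x\<bar> - 1/2)\<^sup>2" by simp
  then have "\<bar>x\<bar> \<le> x\<^sup>2 + 1/4" by (simp add: power2_eq_square algebra_simps)
  with False show ?thesis by (simp add: integral_abs_diff_unif_outside)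
qed

lemma integrable_square_unif: "integrable unif (\<lambda>x. x\<^sup>2)"
  by (intro integrable_unif continuous_intros) measurable

lemma integral_square_unif: "(\<integral>x. x\<^sup>2 \<partial>unif) = 1/12"
  by (subst integral_unif) (auto intro!: continuous_intros simp: integral_square_atLeastAtMost power3_eq_cube)

lemma mean_distance_unif: "mean_distance unif unif = 1/3"
proof -
  have "mean_distance unif unif = integral {-1/2..1/2} (\<lambda>x. \<integral>y. \<bar>x - y\<bar> \<partial>unif)"
    unfolding mean_distance_def integral_abs_diff_unif
    by (rule integral_unif) (auto intro!: continuous_intros)
  also have "\<dots> = integral {-1/2..1/2} (\<lambda>x. x\<^sup>2 + 1/4)"
    by (rule integral_cong) (auto intro!: integral_abs_diff_unif_inside)
  also have "\<dots> = 1/3"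
    by (simp add: integral_add integrable_continuous_real continuous_intros
        integral_square_atLeastAtMost power3_eq_cube)
  finally show ?thesis .
qed

lemma admissible_iff: "admissible \<nu> \<longleftrightarrow> real_distribution \<nu> \<and> integrable \<nu> (\<lambda>x. x\<^sup>2)"
  by (auto simp: admissible_def real_distribution_def real_distribution_axioms_def Vfun_def[abs_def])

lemma admissible_integrable_id:
  assumes "admissible \<nu>"
  shows "integrable \<nu> (\<lambda>x. x)"
proof (rule Bochner_Integration.integrable_bound)
  interpret real_distribution \<nu> using assms by (simp add: admissible_iff)
  show "integrable \<nu> (\<lambda>x. x\<^sup>2 + 1)"
    using assms by (simp add: admissible_iff)
  show "(\<lambda>x. x) \<in> borel_measurable \<nu>" by simp
  have "\<bar>x\<bar> \<le> x\<^sup>2 + 1" for x :: real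
    using zero_le_power2[of "\<bar>x\<bar> - 1"] by (simp add: power2_eq_square algebra_simps)
  then show "AE x in \<nu>. norm x \<le> norm (x\<^sup>2 + 1)" by simp
qed

lemma energy_eq_mean_distance: "energy \<nu> = (\<integral>x. x\<^sup>2 \<partial>\<nu>) - mean_distance \<nu> \<nu> / 2"
  by (simp add: energy_def mean_distance_def gfun_def Vfun_def)

lemma admissible_unif: "admissible unif"
  by (simp add: admissible_iff real_distribution_unif integrable_square_unif)

lemma energy_unif: "energy unif = - 1/12"
  by (simp add: energy_eq_mean_distance integral_square_unif mean_distance_unif)

lemma energy_unif_add_cdf_distance_le:
  assumes \<nu>: "admissible \<nu>"
  shows "energy unif + (\<integral>u. (cdf \<nu> u - cdf unif u)\<^sup>2 \<partial>lborel) \<le> energy \<nu>"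
proof -
  interpret real_distribution \<nu> using \<nu> by (simp add: admissible_iff)
  have int_sq: "integrable \<nu> (\<lambda>x. x\<^sup>2)" using \<nu> by (simp add: admissible_iff)
  have int_pot: "integrable \<nu> (\<lambda>x. \<integral>y. \<bar>x - y\<bar> \<partial>unif)"
  proof (rule Bochner_Integration.integrable_bound)
    show "integrable \<nu> (\<lambda>x. x\<^sup>2 + 1/4)" using int_sq by simp
    show "(\<lambda>x. \<integral>y. \<bar>x - y\<bar> \<partial>unif) \<in> borel_measurable \<nu>"
      unfolding integral_abs_diff_unif by measurable
    show "AE x in \<nu>. norm (\<integral>y. \<bar>x - y\<bar> \<partial>unif) \<le> norm (x\<^sup>2 + 1/4)"
      using integral_abs_diff_unif_le by (simp add: integral_nonneg_AE)
  qed
  have "mean_distance \<nu> unif \<le> (\<integral>x. x\<^sup>2 + 1/4 \<partial>\<nu>)"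
    unfolding mean_distance_def using int_pot int_sq
    by (intro integral_mono integral_abs_diff_unif_le) auto
  also have "\<dots> = (\<integral>x. x\<^sup>2 \<partial>\<nu>) + 1/4"
    using int_sq by (simp add: prob_space[unfolded space_eq_univ])
  finally have "mean_distance \<nu> unif \<le> (\<integral>x. x\<^sup>2 \<partial>\<nu>) + 1/4" .
  moreover have "(\<integral>u. (cdf \<nu> u - cdf unif u)\<^sup>2 \<partial>lborel) =
      mean_distance \<nu> unif - (mean_distance \<nu> \<nu> + 1/3) / 2"
    using integral_cdf_diff_square[OF real_distribution_axioms real_distribution_unif
        admissible_integrable_id[OF \<nu>] admissible_integrable_id[OF admissible_unif]]
    by (simp add: mean_distance_unif)
  ultimately show ?thesis
    unfolding energy_unif energy_eq_mean_distance[of \<nu>] by (simp add: field_simps)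
qed

lemma equilibrium_measure_eq_unif: "equilibrium_measure = unif"
  unfolding equilibrium_measure_def
proof (rule the_equality)
  have "0 \<le> (\<integral>u. (cdf \<nu> u - cdf unif u)\<^sup>2 \<partial>lborel)" for \<nu>
    by (rule integral_nonneg_AE) auto
  then show "admissible unif \<and> (\<forall>\<nu>. admissible \<nu> \<longrightarrow> energy unif \<le> energy \<nu>)"
    using energy_unif_add_cdf_distance_le admissible_unif by (smt (verit))
next
  fix \<mu> assume "admissible \<mu> \<and> (\<forall>\<nu>. admissible \<nu> \<longrightarrow> energy \<mu> \<le> energy \<nu>)"
  then have \<mu>: "admissible \<mu>" and "energy \<mu> \<le> energy unif"
    using admissible_unif by auto
  then have "(\<integral>u. (cdf \<mu> u - cdf unif u)\<^sup>2 \<partial>lborel) \<le> 0"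
    using energy_unif_add_cdf_distance_le[OF \<mu>] by simp
  then have "AE u in lborel. (cdf \<mu> u - cdf unif u)\<^sup>2 = 0"
    using integrable_cdf_diff_square[OF _ real_distribution_unif admissible_integrable_id[OF \<mu>]
        admissible_integrable_id[OF admissible_unif]] \<mu>
    by (subst integral_nonneg_eq_0_iff_AE[symmetric])
      (auto simp: admissible_iff intro: antisym integral_nonneg_AE)
  then show "\<mu> = unif"
    using \<mu> by (intro real_distribution_eqI_AE_cdf real_distribution_unif) (auto simp: admissible_iff)
qed

section \<open>The quantile configuration\<close>

lemma sum_abs_diff_nat: "(\<Sum>i<N. \<Sum>j<N. \<bar>real i - real j\<bar>) = (real N ^ 3 - real N) / 3"
proof (induction N)
  case (Suc N)
  have "(\<Sum>i<N. \<bar>real i - real N\<bar>) = (\<Sum>i<N. real N - real i)"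
    by (intro sum.cong) auto
  also have "\<dots> = real N * (real N + 1) / 2"
    by (induction N) (auto simp: sum_subtractf field_simps)
  finally have column: "(\<Sum>i<N. \<bar>real i - real N\<bar>) = real N * (real N + 1) / 2" .
  then have row: "(\<Sum>j<N. \<bar>real N - real j\<bar>) = real N * (real N + 1) / 2"
    by (simp add: abs_minus_commute)
  have "(\<Sum>i<Suc N. \<Sum>j<Suc N. \<bar>real i - real j\<bar>) =
      (\<Sum>i<N. \<Sum>j<N. \<bar>real i - real j\<bar>) + (\<Sum>i<N. \<bar>real i - real N\<bar>) + (\<Sum>j<N. \<bar>real N - real j\<bar>)"
    by (simp add: sum.distrib)
  also have "\<dots> = (real (Suc N) ^ 3 - real (Suc N)) / 3"
    unfolding Suc.IH column row by (simp add: field_simps power3_eq_cube)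
  finally show ?case .
qed simp

definition quantile_config :: "nat \<Rightarrow> nat \<Rightarrow> real" where
  "quantile_config N i = (real i + 1) / real N - 1/2"

lemma quantile_config_diff:
  "N > 0 \<Longrightarrow> quantile_config N i - quantile_config N j = (real i - real j) / real N"
  by (simp add: quantile_config_def field_simps)

lemma abs_quantile_config_le: "i < N \<Longrightarrow> \<bar>quantile_config N i\<bar> \<le> 1/2"
  by (simp add: quantile_config_def field_simps)

lemma sum_quantile_config_square:
  assumes N: "N > 0"
  shows "(\<Sum>i<N. (quantile_config N i)\<^sup>2 + 1/4) = real N / 3 + 1 / (6 * real N)"
proof -
  have "(quantile_config N i)\<^sup>2 + 1/4 = (real i + 1)\<^sup>2 / (real N)\<^sup>2 - (real i + 1) / real N + 1/2" for i
    using N by (simp add: quantile_config_def power2_eq_square field_simps)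
  then have expand: "(\<Sum>i<N. (quantile_config N i)\<^sup>2 + 1/4) =
      (\<Sum>i<N. (real i + 1)\<^sup>2) / (real N)\<^sup>2 - (\<Sum>i<N. real i + 1) / real N + real N / 2"
    by (simp only: sum.distrib sum_subtractf sum_divide_distrib[symmetric]) simp
  have sum_squares: "(\<Sum>i<N. (real i + 1)\<^sup>2) = real N * (real N + 1) * (2 * real N + 1) / 6"
    by (induction N) (auto simp: field_simps power2_eq_square)
  have sum_linear: "(\<Sum>i<N. real i + 1) = real N * (real N + 1) / 2"
    by (induction N) (auto simp: field_simps)
  show ?thesis
    unfolding expand sum_squares sum_linear using N by (simp add: field_simps power2_eq_square)
qed

lemma modulated_energy_quantile_config:
  assumes N: "N > 0"
  shows "modulated_energy N (quantile_config N) unif = 1 / (3 * (real N)\<^sup>2)"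
proof -
  have pairs: "(\<Sum>i<N. \<Sum>j\<in>{..<N} - {i}. gfun (quantile_config N i - quantile_config N j)) =
      (1 - (real N)\<^sup>2) / 3"
  proof -
    have "(\<Sum>j\<in>{..<N} - {i}. gfun (quantile_config N i - quantile_config N j)) =
        - (\<Sum>j<N. \<bar>real i - real j\<bar>) / real N" if "i < N" for i
      using that N by (simp add: sum_diff1 gfun_def quantile_config_diff abs_divide sum_negf
          sum_divide_distrib)
    then have "(\<Sum>i<N. \<Sum>j\<in>{..<N} - {i}. gfun (quantile_config N i - quantile_config N j)) =
        (\<Sum>i<N. - (\<Sum>j<N. \<bar>real i - real j\<bar>) / real N)"
      by (intro sum.cong) auto
    also have "\<dots> = - (\<Sum>i<N. \<Sum>j<N. \<bar>real i - real j\<bar>) / real N"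
      by (simp add: sum_negf sum_divide_distrib)
    also have "\<dots> = (1 - (real N)\<^sup>2) / 3"
      using N by (simp add: sum_abs_diff_nat field_simps power2_eq_square power3_eq_cube)
    finally show ?thesis .
  qed
  have potential: "(\<Sum>i<N. \<integral>y. gfun (quantile_config N i - y) \<partial>unif) =
      - (real N / 3 + 1 / (6 * real N))"
  proof -
    have "(\<Sum>i<N. \<integral>y. gfun (quantile_config N i - y) \<partial>unif) = (\<Sum>i<N. - ((quantile_config N i)\<^sup>2 + 1/4))"
      by (intro sum.cong refl) (simp add: gfun_def integral_abs_diff_unif_inside[OF abs_quantile_config_le])
    also have "\<dots> = - (\<Sum>i<N. (quantile_config N i)\<^sup>2 + 1/4)"
      by (rule sum_negf)
    finally show ?thesis unfolding sum_quantile_config_square[OF N] .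
  qed
  have self: "(\<integral>x. \<integral>y. gfun (x - y) \<partial>unif \<partial>unif) = - 1/3"
    using mean_distance_unif by (simp add: mean_distance_def gfun_def)
  show ?thesis
    unfolding modulated_energy_def pairs potential self
    using N by (simp add: field_simps power2_eq_square)
qed

lemma integral_atLeastAtMost_sum_cells:
  fixes f :: "real \<Rightarrow> 'a::banach"
  assumes t: "mono t" and f: "f integrable_on {t 0..t n}"
  shows "integral {t 0..t n} f = (\<Sum>i<n. integral {t i..t (Suc i)} f)"
  using f
proof (induction n)
  case (Suc n)
  have le: "t 0 \<le> t n" "t n \<le> t (Suc n)" using t by (auto intro: monoD)
  have "integral {t 0..t (Suc n)} f = integral {t 0..t n} f + integral {t n..t (Suc n)} f"
    by (intro Henstock_Kurzweil_Integration.integral_combine[symmetric] le Suc.prems)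
  moreover have "f integrable_on {t 0..t n}"
    using Suc.prems by (rule integrable_subinterval_real) (use le in auto)
  ultimately show ?case
    using Suc.IH by simp
qed simp

lemma right_endpoint_rule_error:
  fixes f :: "real \<Rightarrow> real"
  assumes "a \<le> b" and cont: "continuous_on {a..b} f" and close: "\<And>x. x \<in> {a..b} \<Longrightarrow> \<bar>f b - f x\<bar> \<le> \<eta>"
  shows "\<bar>(b - a) * f b - integral {a..b} f\<bar> \<le> \<eta> * (b - a)"
proof -
  have "(b - a) * f b - integral {a..b} f = integral {a..b} (\<lambda>x. f b - f x)"
    using assms(1) cont by (simp add: integral_diff integrable_continuous_real mult.commute)
  also have "norm \<dots> \<le> \<eta> * (b - a)"
    using assms(1) close by (intro integral_bound continuous_intros cont) auto
  finally show ?thesis by simp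
qed

lemma riemann_sum_error_le:
  fixes f :: "real \<Rightarrow> real"
  assumes "a \<le> b" "N > 0" and cont: "continuous_on {a..b} f"
    and modulus: "\<And>x y. x \<in> {a..b} \<Longrightarrow> y \<in> {a..b} \<Longrightarrow> \<bar>x - y\<bar> \<le> (b - a) / real N \<Longrightarrow> \<bar>f x - f y\<bar> \<le> \<eta>"
  shows "\<bar>(b - a) / real N * (\<Sum>i<N. f (a + (real i + 1) * (b - a) / real N)) - integral {a..b} f\<bar>
    \<le> \<eta> * (b - a)"
proof -
  define h where "h = (b - a) / real N"
  define t where "t k = a + real k * h" for k
  have "h \<ge> 0" using assms(1) by (simp add: h_def)
  then have "mono t" by (auto intro!: monoI mult_right_mono simp: t_def)
  have t_bounds: "t 0 = a" "t N = b" using \<open>N > 0\<close> by (simp_all add: t_def h_def)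
  have cell_sub: "{t i..t (Suc i)} \<subseteq> {a..b}" if "i < N" for i
    using monoD[OF \<open>mono t\<close>, of 0 i] monoD[OF \<open>mono t\<close>, of "Suc i" N] that t_bounds by auto
  have cell: "\<bar>h * f (t (Suc i)) - integral {t i..t (Suc i)} f\<bar> \<le> \<eta> * h" if "i < N" for i
  proof -
    have "t (Suc i) - t i = h" by (simp add: t_def algebra_simps)
    then show ?thesis
      using right_endpoint_rule_error[of "t i" "t (Suc i)" f \<eta>] monoD[OF \<open>mono t\<close>, of i "Suc i"]
        continuous_on_subset[OF cont cell_sub[OF that]] modulus[of "t (Suc i)"] cell_sub[OF that]
      by (auto simp: h_def)
  qed
  have "integral {a..b} f = (\<Sum>i<N. integral {t i..t (Suc i)} f)"
    using integral_atLeastAtMost_sum_cells[OF \<open>mono t\<close>, of f N] t_bounds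
    by (simp add: integrable_continuous_real cont)
  moreover have "(b - a) / real N * (\<Sum>i<N. f (a + (real i + 1) * (b - a) / real N)) =
      (\<Sum>i<N. h * f (t (Suc i)))"
    by (simp add: sum_distrib_left t_def h_def algebra_simps)
  ultimately have "\<bar>(b - a) / real N * (\<Sum>i<N. f (a + (real i + 1) * (b - a) / real N)) - integral {a..b} f\<bar>
      \<le> (\<Sum>i<N. \<bar>h * f (t (Suc i)) - integral {t i..t (Suc i)} f\<bar>)"
    by (simp add: sum_subtractf[symmetric] sum_abs)
  also have "\<dots> \<le> (\<Sum>i<N. \<eta> * h)"
    using cell by (intro sum_mono) auto
  also have "\<dots> = \<eta> * (b - a)"
    using \<open>N > 0\<close> by (simp add: h_def)
  finally show ?thesis .
qed

lemma riemann_sum_tendsto_integral: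
  fixes f :: "real \<Rightarrow> real"
  assumes "a \<le> b" and cont: "continuous_on {a..b} f"
  shows "(\<lambda>N. (b - a) / real N * (\<Sum>i<N. f (a + (real i + 1) * (b - a) / real N)))
    \<longlonglongrightarrow> integral {a..b} f"
proof (rule LIMSEQ_I)
  fix r :: real assume "r > 0"
  define \<eta> where "\<eta> = r / (b - a + 1)"
  have "\<eta> > 0" using \<open>r > 0\<close> assms(1) by (simp add: \<eta>_def)
  have "\<eta> * (b - a) < \<eta> * (b - a + 1)" using \<open>\<eta> > 0\<close> by (simp add: algebra_simps)
  also have "\<dots> = r" using assms(1) by (simp add: \<eta>_def)
  finally have "\<eta> * (b - a) < r" .
  obtain d where "d > 0" and d: "\<And>x y. x \<in> {a..b} \<Longrightarrow> y \<in> {a..b} \<Longrightarrow> \<bar>x - y\<bar> < d \<Longrightarrow> \<bar>f x - f y\<bar> < \<eta>"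
    using compact_uniformly_continuous[OF cont compact_Icc] \<open>\<eta> > 0\<close>
    unfolding uniformly_continuous_on_def dist_real_def by metis
  obtain M :: nat where M: "(b - a) / d < real M"
    using reals_Archimedean2 by blast
  show "\<exists>no. \<forall>N\<ge>no. norm ((b - a) / real N * (\<Sum>i<N. f (a + (real i + 1) * (b - a) / real N))
    - integral {a..b} f) < r"
  proof (intro exI allI impI)
    fix N assume "Suc M \<le> N"
    then have "N > 0" and "(b - a) / d < real N"
      using M by auto
    then have "(b - a) / real N < d"
      using \<open>d > 0\<close> by (simp add: field_simps)
    then have "\<bar>(b - a) / real N * (\<Sum>i<N. f (a + (real i + 1) * (b - a) / real N)) - integral {a..b} f\<bar>
        \<le> \<eta> * (b - a)"
      using d by (intro riemann_sum_error_le assms \<open>N > 0\<close>) (auto intro: less_imp_le)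
    then show "norm ((b - a) / real N * (\<Sum>i<N. f (a + (real i + 1) * (b - a) / real N))
      - integral {a..b} f) < r"
      using \<open>\<eta> * (b - a) < r\<close> by simp
  qed
qed

lemma modulated_energy_quantile_config_tendsto:
  "(\<lambda>N. modulated_energy N (quantile_config N) equilibrium_measure) \<longlonglongrightarrow> 0"
proof -
  have "(\<lambda>N. 1 / (3 * (real N)\<^sup>2)) \<longlonglongrightarrow> 0"
    by (intro tendsto_divide_0[OF tendsto_const] filterlim_at_top_imp_at_infinity
        filterlim_tendsto_pos_mult_at_top[OF tendsto_const] filterlim_pow_at_top filterlim_real_sequentially) auto
  moreover have "\<forall>\<^sub>F N in sequentially.
      1 / (3 * (real N)\<^sup>2) = modulated_energy N (quantile_config N) equilibrium_measure"
    using eventually_gt_at_top[of 0]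
    by eventually_elim (simp add: equilibrium_measure_eq_unif modulated_energy_quantile_config)
  ultimately show ?thesis by (rule Lim_transform_eventually)
qed

lemma empirical_measure_quantile_config_tendsto:
  assumes "bounded_continuous_fun \<phi>"
  shows "(\<lambda>N. (1 / real N) * (\<Sum>i<N. \<phi> (quantile_config N i))) \<longlonglongrightarrow> (\<integral>y. \<phi> y \<partial>equilibrium_measure)"
proof -
  have cont: "continuous_on UNIV \<phi>" using assms by (simp add: bounded_continuous_fun_def)
  have "(\<integral>y. \<phi> y \<partial>equilibrium_measure) = integral {-1/2..1/2} \<phi>"
    unfolding equilibrium_measure_eq_unif
    by (rule integral_unif)
      (auto intro: continuous_on_subset[OF cont] borel_measurable_continuous_onI[OF cont])
  moreover have "(\<lambda>N. (1 / real N) * (\<Sum>i<N. \<phi> (quantile_config N i))) =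
      (\<lambda>N. (1/2 - -1/2) / real N * (\<Sum>i<N. \<phi> (-1/2 + (real i + 1) * (1/2 - -1/2) / real N)))"
    by (simp add: fun_eq_iff quantile_config_def)
  moreover have "\<dots> \<longlonglongrightarrow> integral {-1/2..1/2} \<phi>"
    by (rule riemann_sum_tendsto_integral) (auto intro: continuous_on_subset[OF cont])
  ultimately show ?thesis by simp
qed

section \<open>Uniqueness for the particle system\<close>

definition particle_force :: "real \<Rightarrow> nat \<Rightarrow> (nat \<Rightarrow> real) \<Rightarrow> nat \<Rightarrow> real" where
  "particle_force \<epsilon> N y i =
     - (1 / (\<epsilon>\<^sup>2 * real N)) * (\<Sum>j\<in>{..<N} - {i}. gder (y i - y j)) - (1 / \<epsilon>\<^sup>2) * deriv Vfun (y i)"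

lemma is_solution_iff:
  "is_solution \<epsilon> N x0 x v \<longleftrightarrow>
     (\<forall>i<N. x 0 i = x0 i \<and> v 0 i = 0) \<and>
     (\<forall>t\<ge>0. \<forall>i<N. ((\<lambda>s. x s i) has_real_derivative v t i) (at t within {0..}) \<and>
        ((\<lambda>s. v s i) has_real_derivative particle_force \<epsilon> N (x t) i) (at t within {0..}))"
  by (simp add: is_solution_def particle_force_def)

lemma gder_eq_minus_sgn: "gder s = - sgn s"
proof (cases s "0::real" rule: linorder_cases)
  case less
  have "(gfun has_real_derivative 1) (at s)"
    by (rule has_field_derivative_transform_within_open[where f = "\<lambda>x. x" and S = "{..<0}"])
      (use less in \<open>auto simp: gfun_def\<close>)
  then show ?thesis using less by (simp add: gder_def DERIV_imp_deriv)
next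
  case greater
  have "(gfun has_real_derivative -1) (at s)"
    by (rule has_field_derivative_transform_within_open[where f = "\<lambda>x. - x" and S = "{0<..}"])
      (use greater in \<open>auto intro!: derivative_eq_intros simp: gfun_def\<close>)
  then show ?thesis using greater by (simp add: gder_def DERIV_imp_deriv)
qed (simp add: gder_def)

lemma deriv_Vfun: "deriv Vfun s = 2 * s"
  unfolding Vfun_def[abs_def] by (rule DERIV_imp_deriv) (auto intro!: derivative_eq_intros)

lemma particle_force_eq:
  "particle_force \<epsilon> N y i = (\<Sum>j\<in>{..<N} - {i}. sgn (y i - y j)) / (\<epsilon>\<^sup>2 * real N) - 2 * y i / \<epsilon>\<^sup>2"
  by (simp add: particle_force_def gder_eq_minus_sgn deriv_Vfun sum_negf)

text \<open>Separated particles keep the order of their positions under perturbations of size less than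
  \<open>r/2\<close>, so the interaction force does not change and only the linear confinement responds.\<close>
lemma particle_force_perturb:
  assumes sep: "\<And>j. j < N \<Longrightarrow> j \<noteq> i \<Longrightarrow> r \<le> \<bar>y i - y j\<bar>"
    and close: "\<And>k. k < N \<Longrightarrow> \<bar>y' k - y k\<bar> < r / 2" and "i < N"
  shows "particle_force \<epsilon> N y' i - particle_force \<epsilon> N y i = - (2 / \<epsilon>\<^sup>2) * (y' i - y i)"
proof -
  have "sgn (y' i - y' j) = sgn (y i - y j)" if "j \<in> {..<N} - {i}" for j
    using sep[of j] close[of i] close[of j] that \<open>i < N\<close>
    by (auto simp: sgn_real_def abs_real_def split: if_splits)
  then have "(\<Sum>j\<in>{..<N} - {i}. sgn (y' i - y' j)) = (\<Sum>j\<in>{..<N} - {i}. sgn (y i - y j))"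
    by (rule sum.cong[OF refl])
  then show ?thesis by (simp add: particle_force_eq diff_divide_distrib)
qed

lemma continuous_on_eq_zero_by_continuation:
  fixes m :: "real \<Rightarrow> real"
  assumes cont: "continuous_on {0..} m" and "m 0 = 0" and "c > 0"
    and step: "\<And>T. T > 0 \<Longrightarrow> (\<And>s. 0 \<le> s \<Longrightarrow> s < T \<Longrightarrow> m s < c) \<Longrightarrow> m T = 0"
    and "t \<ge> 0"
  shows "m t = 0"
proof -
  define B where "B = {0..} \<inter> m -` {c..}"
  have below_c: "m s < c" if "0 \<le> s" "s \<notin> B" for s
    using that by (auto simp: B_def)
  have "B = {}"
  proof (rule ccontr)
    assume "B \<noteq> {}"
    have "closed B" unfolding B_def by (intro continuous_closed_preimage cont closed_atLeast)
    moreover have "bdd_below B" unfolding B_def by (auto intro: bdd_belowI[of _ 0])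
    ultimately have "Inf B \<in> B" using \<open>B \<noteq> {}\<close> by (intro closed_contains_Inf)
    moreover have "m s < c" if "0 \<le> s" "s < Inf B" for s
      using below_c[OF that(1)] cInf_lower[OF _ \<open>bdd_below B\<close>, of s] that by force
    ultimately show False
      using step[of "Inf B"] \<open>m 0 = 0\<close> \<open>c > 0\<close> by (cases "Inf B = 0") (auto simp: B_def)
  qed
  then show ?thesis
    using step[of t] below_c \<open>m 0 = 0\<close> \<open>t \<ge> 0\<close> by (cases "t = 0") auto
qed

lemma is_solution_continuous:
  assumes "is_solution \<epsilon> N x0 x v" "i < N"
  shows "continuous_on {0..} (\<lambda>t. x t i)" "continuous_on {0..} (\<lambda>t. v t i)"
  using assms unfolding is_solution_iff continuous_on_eq_continuous_within
  by (auto intro: DERIV_continuous)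

definition deviation_energy ::
  "real \<Rightarrow> nat \<Rightarrow> (real \<Rightarrow> nat \<Rightarrow> real) \<Rightarrow> (real \<Rightarrow> nat \<Rightarrow> real) \<Rightarrow>
    (real \<Rightarrow> nat \<Rightarrow> real) \<Rightarrow> (real \<Rightarrow> nat \<Rightarrow> real) \<Rightarrow> real \<Rightarrow> real" where
  "deviation_energy \<epsilon> N x v x' v' s = (\<Sum>i<N. (v' s i - v s i)\<^sup>2 + 2 / \<epsilon>\<^sup>2 * (x' s i - x s i)\<^sup>2)"

lemma deviation_energy_ge:
  assumes "k < N"
  shows "(v' s k - v s k)\<^sup>2 \<le> deviation_energy \<epsilon> N x v x' v' s"
    and "2 / \<epsilon>\<^sup>2 * (x' s k - x s k)\<^sup>2 \<le> deviation_energy \<epsilon> N x v x' v' s"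
proof -
  have "(v' s k - v s k)\<^sup>2 + 2 / \<epsilon>\<^sup>2 * (x' s k - x s k)\<^sup>2 \<le> deviation_energy \<epsilon> N x v x' v' s"
    unfolding deviation_energy_def by (rule member_le_sum) (use assms in auto)
  moreover have "0 \<le> 2 / \<epsilon>\<^sup>2 * (x' s k - x s k)\<^sup>2" "0 \<le> (v' s k - v s k)\<^sup>2" by simp_all
  ultimately show "(v' s k - v s k)\<^sup>2 \<le> deviation_energy \<epsilon> N x v x' v' s"
    and "2 / \<epsilon>\<^sup>2 * (x' s k - x s k)\<^sup>2 \<le> deviation_energy \<epsilon> N x v x' v' s"
    by linarith+
qed

lemma abs_deviation_less:
  assumes "\<epsilon> > 0" "r > 0" "k < N"
    and "deviation_energy \<epsilon> N x v x' v' s < 2 / \<epsilon>\<^sup>2 * (r / 2)\<^sup>2"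
  shows "\<bar>x' s k - x s k\<bar> < r / 2"
proof -
  have "2 / \<epsilon>\<^sup>2 * (x' s k - x s k)\<^sup>2 < 2 / \<epsilon>\<^sup>2 * (r / 2)\<^sup>2"
    using deviation_energy_ge(2)[OF \<open>k < N\<close>] assms(4) by (rule order_le_less_trans)
  then have "\<bar>x' s k - x s k\<bar>\<^sup>2 < (r / 2)\<^sup>2" using \<open>\<epsilon> > 0\<close> by (simp add: field_simps)
  then show ?thesis by (rule power_less_imp_less_base) (use \<open>r > 0\<close> in simp)
qed

lemma deviation_energy_has_derivative_zero:
  assumes sol: "is_solution \<epsilon> N x0 x v" and sol': "is_solution \<epsilon> N x0 x' v'" and "t \<ge> 0"
    and sep: "\<And>i j. i < N \<Longrightarrow> j < N \<Longrightarrow> i \<noteq> j \<Longrightarrow> r \<le> \<bar>x t i - x t j\<bar>"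
    and close: "\<And>k. k < N \<Longrightarrow> \<bar>x' t k - x t k\<bar> < r / 2"
  shows "(deviation_energy \<epsilon> N x v x' v' has_real_derivative 0) (at t within {0..})"
proof -
  define z where "z s i = x' s i - x s i" for s i
  define q where "q s i = v' s i - v s i" for s i
  have dz: "((\<lambda>s. z s i) has_real_derivative q t i) (at t within {0..})"
    and dq: "((\<lambda>s. q s i) has_real_derivative - (2 / \<epsilon>\<^sup>2) * z t i) (at t within {0..})"
    if "i < N" for i
  proof -
    show "((\<lambda>s. z s i) has_real_derivative q t i) (at t within {0..})"
      using sol sol' \<open>t \<ge> 0\<close> that unfolding is_solution_iff z_def q_def
      by (auto intro!: derivative_eq_intros)
    have "((\<lambda>s. q s i) has_real_derivative
        particle_force \<epsilon> N (x' t) i - particle_force \<epsilon> N (x t) i) (at t within {0..})"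
      using sol sol' \<open>t \<ge> 0\<close> that unfolding is_solution_iff q_def by (auto intro!: derivative_eq_intros)
    then show "((\<lambda>s. q s i) has_real_derivative - (2 / \<epsilon>\<^sup>2) * z t i) (at t within {0..})"
      using particle_force_perturb[of N i r "x t" "x' t" \<epsilon>] sep close that by (auto simp: z_def)
  qed
  define \<kappa> where "\<kappa> = 2 / \<epsilon>\<^sup>2"
  have "((\<lambda>s. \<Sum>i<N. (q s i)\<^sup>2 + \<kappa> * (z s i)\<^sup>2) has_real_derivative
      (\<Sum>i<N. 2 * q t i * (- \<kappa> * z t i) + \<kappa> * (2 * z t i * q t i))) (at t within {0..})"
    using dz dq unfolding \<kappa>_def[symmetric] by (intro DERIV_sum) (auto intro!: derivative_eq_intros)
  moreover have "(\<Sum>i<N. 2 * q t i * (- \<kappa> * z t i) + \<kappa> * (2 * z t i * q t i)) = 0"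
    by (simp add: algebra_simps)
  ultimately show ?thesis
    unfolding deviation_energy_def[abs_def] z_def q_def \<kappa>_def by simp
qed

text \<open>The deviation energy of two solutions is conserved as long as the deviation stays below half
  the separation of one of them; a continuation argument shows that this is always the case.\<close>
lemma is_solution_unique:
  assumes "\<epsilon> > 0" "r > 0" and sol: "is_solution \<epsilon> N x0 x v" and sol': "is_solution \<epsilon> N x0 x' v'"
    and sep: "\<And>t i j. t \<ge> 0 \<Longrightarrow> i < N \<Longrightarrow> j < N \<Longrightarrow> i \<noteq> j \<Longrightarrow> r \<le> \<bar>x t i - x t j\<bar>"
    and "t \<ge> 0" "i < N"
  shows "x' t i = x t i \<and> v' t i = v t i"
proof -
  define E where "E = deviation_energy \<epsilon> N x v x' v'"
  have "E s = 0" if "s \<ge> 0" for s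
  proof (rule continuous_on_eq_zero_by_continuation[of E "2 / \<epsilon>\<^sup>2 * (r / 2)\<^sup>2"])
    show "continuous_on {0..} E"
      unfolding E_def deviation_energy_def[abs_def]
      using is_solution_continuous[OF sol] is_solution_continuous[OF sol']
      by (intro continuous_intros) auto
    show "E 0 = 0" using sol sol' by (simp add: E_def deviation_energy_def is_solution_iff)
    show "2 / \<epsilon>\<^sup>2 * (r / 2)\<^sup>2 > 0" using \<open>\<epsilon> > 0\<close> \<open>r > 0\<close> by simp
    fix T :: real assume "T > 0" and small: "\<And>s. 0 \<le> s \<Longrightarrow> s < T \<Longrightarrow> E s < 2 / \<epsilon>\<^sup>2 * (r / 2)\<^sup>2"
    have "E T = E 0"
    proof (rule DERIV_isconst_end[OF \<open>T > 0\<close>])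
      show "continuous_on {0..T} E" by (rule continuous_on_subset[OF \<open>continuous_on {0..} E\<close>]) auto
      fix s assume "0 < s" "s < T"
      then have "\<bar>x' s k - x s k\<bar> < r / 2" if "k < N" for k
        using abs_deviation_less[OF \<open>\<epsilon> > 0\<close> \<open>r > 0\<close> that, where x = x and v = v and x' = x'
            and v' = v'] small[of s]
        by (auto simp: E_def)
      then have "(E has_real_derivative 0) (at s within {0..})"
        unfolding E_def using sep \<open>0 < s\<close>
        by (intro deviation_energy_has_derivative_zero[OF sol sol', where r = r]) auto
      moreover have "at s within {0..} = at s" using \<open>0 < s\<close> by (intro at_within_interior) auto
      ultimately show "(E has_real_derivative 0) (at s)" by simp
    qed
    then show "E T = 0" using \<open>E 0 = 0\<close> by simp
  qed (fact that)
  then have "(v' t i - v t i)\<^sup>2 \<le> 0" "2 / \<epsilon>\<^sup>2 * (x' t i - x t i)\<^sup>2 \<le> 0"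
    using deviation_energy_ge[OF \<open>i < N\<close>, where \<epsilon> = \<epsilon> and x = x and v = v and x' = x'
        and v' = v' and s = t] \<open>t \<ge> 0\<close>
    by (auto simp: E_def)
  then show ?thesis
    using \<open>\<epsilon> > 0\<close> by (simp add: field_simps)
qed

section \<open>The oscillating cluster and its current\<close>

definition cluster_freq :: "real \<Rightarrow> real" where
  "cluster_freq \<epsilon> = sqrt 2 / \<epsilon>"

lemma cluster_freq_square: "(cluster_freq \<epsilon>)\<^sup>2 = 2 / \<epsilon>\<^sup>2"
  by (simp add: cluster_freq_def power_divide)

definition cluster_position :: "real \<Rightarrow> nat \<Rightarrow> real \<Rightarrow> nat \<Rightarrow> real" where
  "cluster_position \<epsilon> N t i = quantile_config N i + (cos (cluster_freq \<epsilon> * t) - 1) / (2 * real N)"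

definition cluster_velocity :: "real \<Rightarrow> nat \<Rightarrow> real \<Rightarrow> real" where
  "cluster_velocity \<epsilon> N t = - cluster_freq \<epsilon> * sin (cluster_freq \<epsilon> * t) / (2 * real N)"

lemma sum_sgn_diff_nat:
  "(\<Sum>j<M. sgn (real i - real j)) = (if M \<le> i then real M else 2 * real i + 1 - real M)"
  by (induction M) (auto simp: not_less_eq_eq)

lemma particle_force_cluster:
  assumes "N > 0" "i < N"
  shows "particle_force \<epsilon> N (cluster_position \<epsilon> N t) i = - cos (cluster_freq \<epsilon> * t) / (\<epsilon>\<^sup>2 * real N)"
proof -
  have "sgn (cluster_position \<epsilon> N t i - cluster_position \<epsilon> N t j) = sgn (real i - real j)" for j
    using assms by (simp add: cluster_position_def quantile_config_diff)
  then have "(\<Sum>j\<in>{..<N} - {i}. sgn (cluster_position \<epsilon> N t i - cluster_position \<epsilon> N t j)) =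
      (\<Sum>j<N. sgn (real i - real j))"
    using assms by (simp add: sum_diff1)
  also have "\<dots> = 2 * real i + 1 - real N"
    using assms by (simp add: sum_sgn_diff_nat)
  finally have interaction: "(\<Sum>j\<in>{..<N} - {i}. sgn (cluster_position \<epsilon> N t i - cluster_position \<epsilon> N t j)) =
      2 * real i + 1 - real N" .
  show ?thesis
    unfolding particle_force_eq interaction
    using assms by (cases "\<epsilon> = 0") (simp_all add: cluster_position_def quantile_config_def field_simps)
qed

lemma is_solution_cluster:
  assumes "\<epsilon> > 0" "N > 0"
  shows "is_solution \<epsilon> N (quantile_config N) (cluster_position \<epsilon> N) (\<lambda>t i. cluster_velocity \<epsilon> N t)"
  unfolding is_solution_iff
proof (intro conjI allI impI)
  fix t :: real and i assume "t \<ge> 0" "i < N"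
  show "((\<lambda>s. cluster_position \<epsilon> N s i) has_real_derivative cluster_velocity \<epsilon> N t) (at t within {0..})"
    unfolding cluster_position_def cluster_velocity_def
    using assms by (auto intro!: derivative_eq_intros simp: field_simps)
  have "((\<lambda>s. cluster_velocity \<epsilon> N s) has_real_derivative
      - (cluster_freq \<epsilon>)\<^sup>2 * cos (cluster_freq \<epsilon> * t) / (2 * real N)) (at t within {0..})"
    unfolding cluster_velocity_def using assms by (auto intro!: derivative_eq_intros simp: power2_eq_square)
  then show "((\<lambda>s. cluster_velocity \<epsilon> N s) has_real_derivative
      particle_force \<epsilon> N (cluster_position \<epsilon> N t) i) (at t within {0..})"
    using assms \<open>i < N\<close> by (simp add: particle_force_cluster cluster_freq_square field_simps)
qed (simp_all add: cluster_position_def cluster_velocity_def)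

lemma solution_eq_cluster:
  assumes "\<epsilon> > 0" "N > 0" and sol: "is_solution \<epsilon> N (quantile_config N) x v" and "t \<ge> 0" "i < N"
  shows "x t i = cluster_position \<epsilon> N t i" "v t i = cluster_velocity \<epsilon> N t"
proof -
  have "1 / real N \<le> \<bar>cluster_position \<epsilon> N s j - cluster_position \<epsilon> N s k\<bar>" if "j \<noteq> k" for s j k
  proof -
    have "1 \<le> \<bar>real j - real k\<bar>" using that by linarith
    then show ?thesis
      using \<open>N > 0\<close> by (simp add: cluster_position_def quantile_config_diff abs_divide divide_right_mono)
  qed
  then have "x t i = cluster_position \<epsilon> N t i \<and> v t i = cluster_velocity \<epsilon> N t"
    using assms
    by (intro is_solution_unique[OF \<open>\<epsilon> > 0\<close> _ is_solution_cluster sol, where r = "1 / real N"]) auto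
  then show "x t i = cluster_position \<epsilon> N t i" "v t i = cluster_velocity \<epsilon> N t" by simp_all
qed

lemma current_pairing_solution:
  assumes "\<epsilon> > 0" "N > 0" and sol: "is_solution \<epsilon> N (quantile_config N) x v" and "t \<ge> 0"
  shows "current_pairing N x v t \<phi> =
    cluster_velocity \<epsilon> N t * ((1 / real N) * (\<Sum>i<N. \<phi> (cluster_position \<epsilon> N t i)))"
  using solution_eq_cluster[OF assms]
  by (simp add: current_pairing_def sum_distrib_left)

lemma abs_current_pairing_solution_le:
  assumes "\<epsilon> > 0" "N > 0" and sol: "is_solution \<epsilon> N (quantile_config N) x v" and "t \<ge> 0"
    and bound: "\<And>y. \<bar>\<phi> y\<bar> \<le> B"
  shows "\<bar>current_pairing N x v t \<phi>\<bar> \<le> B / (\<epsilon> * real N)"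
proof -
  have "\<bar>\<Sum>i<N. \<phi> (cluster_position \<epsilon> N t i)\<bar> \<le> real N * B"
    using order_trans[OF sum_abs sum_bounded_above[of "{..<N}" _ B]] bound by simp
  then have avg: "\<bar>(1 / real N) * (\<Sum>i<N. \<phi> (cluster_position \<epsilon> N t i))\<bar> \<le> B"
    using \<open>N > 0\<close> by (simp add: abs_mult field_simps)
  have "\<bar>cluster_velocity \<epsilon> N t\<bar> \<le> sqrt 2 / \<epsilon> / (2 * real N)"
    using \<open>\<epsilon> > 0\<close> abs_sin_le_one[of "cluster_freq \<epsilon> * t"]
    by (auto simp: cluster_velocity_def cluster_freq_def abs_mult abs_divide
        intro!: divide_right_mono mult_left_le)
  also have "\<dots> \<le> 1 / (\<epsilon> * real N)"
    using sqrt2_less_2 \<open>\<epsilon> > 0\<close> \<open>N > 0\<close> by (simp add: field_simps)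
  finally have vel: "\<bar>cluster_velocity \<epsilon> N t\<bar> \<le> 1 / (\<epsilon> * real N)" .
  have "\<bar>current_pairing N x v t \<phi>\<bar> \<le> 1 / (\<epsilon> * real N) * B"
    unfolding current_pairing_solution[OF assms(1-4)] abs_mult
    using avg vel \<open>\<epsilon> > 0\<close> by (intro mult_mono) auto
  then show ?thesis by simp
qed

lemma current_pairing_tendsto_zero_uniformly:
  fixes x v :: "real \<Rightarrow> nat \<Rightarrow> real \<Rightarrow> nat \<Rightarrow> real"
  assumes sol: "\<And>\<epsilon> N. \<epsilon> > 0 \<Longrightarrow> N \<ge> 2 \<Longrightarrow> is_solution \<epsilon> N (quantile_config N) (x \<epsilon> N) (v \<epsilon> N)"
    and pos: "\<And>k. e k > 0" "\<And>k. n k \<ge> 2"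
    and lim: "filterlim (\<lambda>k. e k * real (n k)) at_top sequentially"
    and \<phi>: "bounded_continuous_fun \<phi>" and "\<delta> > 0"
  shows "\<forall>\<^sub>F k in sequentially. \<forall>t\<ge>0. \<bar>current_pairing (n k) (x (e k) (n k)) (v (e k) (n k)) t \<phi>\<bar> < \<delta>"
proof -
  obtain B where B: "\<And>y. \<bar>\<phi> y\<bar> \<le> B"
    using \<phi> unfolding bounded_continuous_fun_def bounded_iff by auto
  have "(\<lambda>k. B / (e k * real (n k))) \<longlonglongrightarrow> 0"
    by (rule tendsto_divide_0[OF tendsto_const filterlim_at_top_imp_at_infinity[OF lim]])
  then have "\<forall>\<^sub>F k in sequentially. B / (e k * real (n k)) < \<delta>"
    using \<open>\<delta> > 0\<close> by (rule order_tendstoD)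
  then show ?thesis
  proof (rule eventually_mono, intro allI impI)
    fix k t assume "B / (e k * real (n k)) < \<delta>" "(t::real) \<ge> 0"
    moreover have "n k > 0" using pos(2)[of k] by simp
    ultimately show "\<bar>current_pairing (n k) (x (e k) (n k)) (v (e k) (n k)) t \<phi>\<bar> < \<delta>"
      using abs_current_pairing_solution_le[OF pos(1) _ sol[OF pos] _ B] by (meson order_le_less_trans)
  qed
qed

lemma filterlim_bounded_regimeI:
  fixes e :: "nat \<Rightarrow> real" and n :: "nat \<Rightarrow> nat"
  assumes pos: "\<And>k. e k > 0" and lim: "filterlim n at_top sequentially"
    and bound: "\<And>k. e k * real (n k) \<le> C"
  shows "filterlim (\<lambda>k. (e k, n k)) (bounded_regime C) sequentially"
proof -
  have "\<forall>\<^sub>F k in sequentially. 1 \<le> n k"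
    using lim by (simp add: filterlim_at_top)
  then have "\<forall>\<^sub>F k in sequentially. e k \<le> C / real (n k)"
    by eventually_elim (use bound in \<open>simp add: pos_le_divide_eq\<close>)
  moreover have "(\<lambda>k. C / real (n k)) \<longlonglongrightarrow> 0"
    using lim by (intro tendsto_divide_0[OF tendsto_const] filterlim_at_top_imp_at_infinity
        filterlim_compose[OF filterlim_real_sequentially])
  ultimately have "e \<longlonglongrightarrow> 0"
    using pos by (intro tendsto_sandwich[of "\<lambda>_. 0" e sequentially "\<lambda>k. C / real (n k)"])
      (auto intro: less_imp_le always_eventually)
  moreover have "\<forall>k. e k \<in> {0<..} \<and> e k \<noteq> 0"
    using pos by (metis greaterThan_iff less_irrefl)
  ultimately have "filterlim e (at_right 0) sequentially"
    by (simp add: filterlim_at always_eventually)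
  then show ?thesis
    unfolding bounded_regime_def
    using bound by (auto simp: filterlim_inf filterlim_principal intro!: filterlim_Pair lim)
qed

lemma filterlim_bounded_regime_phase:
  fixes \<omega> :: "nat \<Rightarrow> real"
  assumes "t > 0" "M > 0" and M: "sqrt 2 * t \<le> 2 * pi * real M * C"
    and phase: "\<And>k. 2 * real (M * (k + 2)) * pi \<le> \<omega> k"
  shows "filterlim (\<lambda>k. (sqrt 2 * t / \<omega> k, k + 2)) (bounded_regime C) sequentially"
proof (rule filterlim_bounded_regimeI)
  have pos: "0 < 2 * real (M * (k + 2)) * pi" for k
    using \<open>M > 0\<close> by (simp del: of_nat_mult)
  then show "sqrt 2 * t / \<omega> k > 0" for k
    using phase[of k] \<open>t > 0\<close> by (smt (verit) divide_pos_pos real_sqrt_gt_0_iff mult_pos_pos)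
  show "filterlim (\<lambda>k. k + 2) at_top sequentially"
    by (rule filterlim_add_const_nat_at_top)
  have cancel: "sqrt 2 * t / (2 * real (M * n) * pi) * real n = sqrt 2 * t / (2 * pi * real M)"
    if "n > 0" for n
    using that by simp
  show "sqrt 2 * t / \<omega> k * real (k + 2) \<le> C" for k
  proof -
    have "sqrt 2 * t / \<omega> k * real (k + 2) \<le> sqrt 2 * t / (2 * real (M * (k + 2)) * pi) * real (k + 2)"
      using pos[of k] phase[of k] \<open>t > 0\<close> by (intro mult_right_mono divide_left_mono) auto
    also have "\<dots> = sqrt 2 * t / (2 * pi * real M)"
      by (rule cancel) simp
    also have "\<dots> \<le> C"
      using M \<open>M > 0\<close> by (simp add: field_simps)
    finally show ?thesis .
  qed
qed

lemma cluster_velocity_phase: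
  assumes "\<omega> > 0" "t > 0"
  shows "cluster_velocity (sqrt 2 * t / \<omega>) N t = - (\<omega> * sin \<omega> / (2 * t * real N))"
  using assms by (simp add: cluster_velocity_def cluster_freq_def field_simps)

lemma cluster_velocity_full_periods:
  assumes "t > 0" "M * N > 0"
  shows "cluster_velocity (sqrt 2 * t / (2 * real (M * N) * pi)) N t = 0"
  using assms cluster_velocity_phase[of "2 * real (M * N) * pi" t N] by (simp del: of_nat_mult)

lemma cluster_velocity_quarter_period:
  assumes "t > 0" "N > 0"
  shows "cluster_velocity (sqrt 2 * t / (2 * real (M * N) * pi + pi / 2)) N t \<le> - (pi * real M / t)"
proof -
  have "cluster_velocity (sqrt 2 * t / (2 * real (M * N) * pi + pi / 2)) N t =
      - ((2 * real (M * N) * pi + pi / 2) / (2 * t * real N))"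
  proof -
    have "0 < 2 * real (M * N) * pi + pi / 2"
      using pi_gt_zero by (intro add_nonneg_pos) auto
    then show ?thesis
      using assms cluster_velocity_phase[of "2 * real (M * N) * pi + pi / 2" t N]
      by (simp add: sin_add del: of_nat_mult)
  qed
  moreover have
    "2 * real (M * N) * pi / (2 * t * real N) \<le> (2 * real (M * N) * pi + pi / 2) / (2 * t * real N)"
    using assms by (intro divide_right_mono) auto
  moreover have "2 * real (M * N) * pi / (2 * t * real N) = pi * real M / t"
    using assms by simp
  ultimately show ?thesis by linarith
qed

lemma current_pairing_solution_const_one:
  assumes "\<epsilon> > 0" "N > 0" and sol: "is_solution \<epsilon> N (quantile_config N) x v" and "t \<ge> 0"
  shows "current_pairing N x v t (\<lambda>_. 1) = cluster_velocity \<epsilon> N t"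
  using current_pairing_solution[OF assms] \<open>N > 0\<close> by simp

lemma current_pairing_no_limit:
  fixes x v :: "real \<Rightarrow> nat \<Rightarrow> real \<Rightarrow> nat \<Rightarrow> real"
  assumes sol: "\<And>\<epsilon> N. \<epsilon> > 0 \<Longrightarrow> N \<ge> 2 \<Longrightarrow> is_solution \<epsilon> N (quantile_config N) (x \<epsilon> N) (v \<epsilon> N)"
    and "t > 0" "C > 0"
  shows "\<not> (\<exists>L. ((\<lambda>(\<epsilon>, N). current_pairing N (x \<epsilon> N) (v \<epsilon> N) t (\<lambda>_. 1)) \<longlongrightarrow> L) (bounded_regime C))"
proof
  define J where "J = (\<lambda>(\<epsilon>, N). current_pairing N (x \<epsilon> N) (v \<epsilon> N) t (\<lambda>_. 1))"
  assume "\<exists>L. (J \<longlongrightarrow> L) (bounded_regime C)"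
  then obtain L where L: "(J \<longlongrightarrow> L) (bounded_regime C)" unfolding J_def by blast
  have J_eq: "J (\<epsilon>, N) = cluster_velocity \<epsilon> N t" if "\<epsilon> > 0" "N \<ge> 2" for \<epsilon> N
    using current_pairing_solution_const_one[OF that(1) _ sol[OF that]] that \<open>t > 0\<close>
    by (simp add: J_def)
  obtain M :: nat where M_gt: "sqrt 2 * t / (2 * pi * C) < real M"
    using reals_Archimedean2 by blast
  moreover have "0 < sqrt 2 * t / (2 * pi * C)" using \<open>t > 0\<close> \<open>C > 0\<close> by simp
  ultimately have "M > 0" by linarith
  have M: "sqrt 2 * t \<le> 2 * pi * real M * C"
    using M_gt \<open>C > 0\<close> by (simp add: field_simps)
  define \<omega> where "\<omega> k = 2 * real (M * (k + 2)) * pi" for k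
  have \<omega>_pos: "\<omega> k > 0" for k using \<open>M > 0\<close> by (simp add: \<omega>_def del: of_nat_mult)
  note regime = filterlim_bounded_regime_phase[OF \<open>t > 0\<close> \<open>M > 0\<close> M]
  have "(\<lambda>k. J (sqrt 2 * t / \<omega> k, k + 2)) \<longlonglongrightarrow> L"
    by (rule filterlim_compose[OF L regime]) (simp add: \<omega>_def)
  moreover have "J (sqrt 2 * t / \<omega> k, k + 2) = 0" for k
  proof -
    have "J (sqrt 2 * t / \<omega> k, k + 2) = cluster_velocity (sqrt 2 * t / \<omega> k) (k + 2) t"
      using \<omega>_pos[of k] \<open>t > 0\<close> by (intro J_eq) auto
    also have "\<dots> = 0"
      unfolding \<omega>_def by (intro cluster_velocity_full_periods \<open>t > 0\<close>) (use \<open>M > 0\<close> in simp)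
    finally show ?thesis .
  qed
  ultimately have "L = 0"
    by (simp add: LIMSEQ_const_iff)
  have "(\<lambda>k. J (sqrt 2 * t / (\<omega> k + pi / 2), k + 2)) \<longlonglongrightarrow> L"
    by (rule filterlim_compose[OF L regime]) (simp add: \<omega>_def)
  moreover have "J (sqrt 2 * t / (\<omega> k + pi / 2), k + 2) \<le> - (pi * real M / t)" for k
  proof -
    have "J (sqrt 2 * t / (\<omega> k + pi / 2), k + 2) =
        cluster_velocity (sqrt 2 * t / (\<omega> k + pi / 2)) (k + 2) t"
      using \<omega>_pos[of k] pi_gt_zero \<open>t > 0\<close>
      by (intro J_eq divide_pos_pos mult_pos_pos add_pos_pos) auto
    also have "\<dots> \<le> - (pi * real M / t)"
      unfolding \<omega>_def by (intro cluster_velocity_quarter_period \<open>t > 0\<close>) simp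
    finally show ?thesis .
  qed
  ultimately have "L \<le> - (pi * real M / t)"
    by (intro tendsto_upperbound[of _ L sequentially] always_eventually allI) auto
  then show False
    using \<open>L = 0\<close> \<open>M > 0\<close> \<open>t > 0\<close> pi_gt_zero by (simp add: divide_le_0_iff mult_le_0_iff)
qed

theorem proposition6p1:
  shows "\<exists>X :: nat \<Rightarrow> nat \<Rightarrow> real.
    ((\<lambda>N. modulated_energy N (X N) equilibrium_measure) \<longlonglongrightarrow> 0) \<and>
    (\<forall>\<phi>. bounded_continuous_fun \<phi> \<longrightarrow>
       (\<lambda>N. (1 / real N) * (\<Sum>i<N. \<phi> (X N i))) \<longlonglongrightarrow> (\<integral>y. \<phi> y \<partial>equilibrium_measure)) \<and>
    (\<forall>\<epsilon> N. \<epsilon> > 0 \<longrightarrow> N \<ge> 2 \<longrightarrow> (\<exists>x v. is_solution \<epsilon> N (X N) x v)) \<and>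
    (\<forall>x v :: real \<Rightarrow> nat \<Rightarrow> real \<Rightarrow> nat \<Rightarrow> real.
       (\<forall>\<epsilon> N. \<epsilon> > 0 \<longrightarrow> N \<ge> 2 \<longrightarrow> is_solution \<epsilon> N (X N) (x \<epsilon> N) (v \<epsilon> N)) \<longrightarrow>
       (\<forall>(e :: nat \<Rightarrow> real) (n :: nat \<Rightarrow> nat).
          (\<forall>k. e k > 0 \<and> n k \<ge> 2) \<longrightarrow> e \<longlonglongrightarrow> 0 \<longrightarrow> filterlim n at_top sequentially \<longrightarrow>
          filterlim (\<lambda>k. e k * real (n k)) at_top sequentially \<longrightarrow>
          (\<forall>\<phi>. bounded_continuous_fun \<phi> \<longrightarrow>
             (\<forall>\<delta>>0. \<forall>\<^sub>F k in sequentially. \<forall>t\<ge>0.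
                \<bar>current_pairing (n k) (x (e k) (n k)) (v (e k) (n k)) t \<phi>\<bar> < \<delta>))) \<and>
       (\<forall>t>0. \<forall>C>0. \<exists>\<phi>. bounded_continuous_fun \<phi> \<and>
          \<not> (\<exists>L. ((\<lambda>(\<epsilon>, N). current_pairing N (x \<epsilon> N) (v \<epsilon> N) t \<phi>) \<longlongrightarrow> L)
                   (bounded_regime C))))"
proof (intro exI[of _ quantile_config] conjI allI impI, goal_cases)
  case 1
  show ?case by (rule modulated_energy_quantile_config_tendsto)
next
  case (2 \<phi>)
  then show ?case by (rule empirical_measure_quantile_config_tendsto)
next
  case (3 \<epsilon> N)
  then show ?case using is_solution_cluster[of \<epsilon> N] by auto
next
  case (4 x v e n \<phi> \<delta>)
  \<comment> \<open>only the divergence of \<open>e k * n k\<close> is needed, not \<open>e k \<longrightarrow> 0\<close> or \<open>n k \<longrightarrow> \<infinity>\<close>\<close>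
  then show ?case by (intro current_pairing_tendsto_zero_uniformly) auto
next
  case (5 x v t C)
  then have "\<not> (\<exists>L. ((\<lambda>(\<epsilon>, N). current_pairing N (x \<epsilon> N) (v \<epsilon> N) t (\<lambda>_. 1)) \<longlongrightarrow> L) (bounded_regime C))"
    by (intro current_pairing_no_limit) auto
  moreover have "bounded_continuous_fun (\<lambda>_. 1)"
    by (simp add: bounded_continuous_fun_def)
  ultimately show ?case by blast
qed

end
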